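(* For every positive integer $k$ and $0<\delta\le1$, the mechanism $\mathcal{SA}^k_\delta$ admits a pure Nash equilibrium for every collection $A$, is anonymous, and is $(\delta+\frac1k)$-close to the Pareto frontier in all equilibria: for every collection $A$ and every pure Nash equilibrium outcome $x$ of $\Gamma_{\mathcal{SA}^k_\delta}(A)$ there is no $y\in\mathrm{conv}(A)$ with $y_1>x_1+\delta+\frac1k$ and $y_2>x_2+\delta+\frac1k$.
   Context: Two players bargain over a collection (multiset) of $n$ alternatives $A=(a^j)_{j\in[n]}\subset[0,1]^2$, $a^j_i$ being player $i$'s utility; players are risk neutral and the outcome of a profile is the vector of expected utilities. A $k$-uniform distribution over $[n]$ is the uniform distribution over a multiset of size $k$ of elements of $[n]$; let $k$-$UN([n])$ be the (finite) set of these. In the mechanism $\mathcal{SA}^k_\delta$ each player $i$ submits a set $L_i\subseteq k$-$UN([n])$; a $k$-uniform distribution $\mu$ is selected as follows: uniformly from all of $k$-$UN([n])$ if $L_1=L_2=\emptyset$; uniformly from $L_1\cup L_2$ if $L_1\cap L_2=\emptyset\ne L_1\cup L_2$; and with probability $1-\delta$ uniformly from $L_1\cap L_2$ and with probability $\delta$ uniformly from $L_1\cup L_2$ if $L_1\cap L_2\ne\emptyset$; then an index is drawn from $\mu$. A mechanism is anonymous if both players have the same signal set and the allocation map is symmetric in the two signals. *)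

theory Defs
  imports "HOL-Analysis.Analysis" "HOL-Library.Multiset"
begin

text \<open>A collection of n alternatives is a map a from indices j < n to points of [0,1]^2;
  fst (a j), snd (a j) are the utilities of players 1 and 2.\<close>
definition collection :: "nat \<Rightarrow> (nat \<Rightarrow> real \<times> real) \<Rightarrow> bool" where
  "collection n a \<longleftrightarrow> (\<forall>j<n. a j \<in> {0..1} \<times> {0..1})"

text \<open>k-uniform distributions over [n]: identified with multisets of size k of elements of [n]
  (the distribution assigns probability count M j / k to j).\<close>
definition kUN :: "nat \<Rightarrow> nat \<Rightarrow> nat multiset set" where
  "kUN k n = {M. size M = k \<and> set_mset M \<subseteq> {..<n}}"

definition SA_select :: "nat \<Rightarrow> real \<Rightarrow> nat \<Rightarrow> nat multiset set \<Rightarrow> nat multiset set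
    \<Rightarrow> nat multiset \<Rightarrow> real" where
  "SA_select k \<delta> n L1 L2 \<mu> =
     (if L1 = {} \<and> L2 = {} then (if \<mu> \<in> kUN k n then 1 / real (card (kUN k n)) else 0)
      else if L1 \<inter> L2 = {} then (if \<mu> \<in> L1 \<union> L2 then 1 / real (card (L1 \<union> L2)) else 0)
      else (1 - \<delta>) * (if \<mu> \<in> L1 \<inter> L2 then 1 / real (card (L1 \<inter> L2)) else 0)
           + \<delta> * (if \<mu> \<in> L1 \<union> L2 then 1 / real (card (L1 \<union> L2)) else 0))"

definition SA_alloc :: "nat \<Rightarrow> real \<Rightarrow> nat \<Rightarrow> nat multiset set \<Rightarrow> nat multiset set
    \<Rightarrow> nat \<Rightarrow> real" where
  "SA_alloc k \<delta> n L1 L2 j =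
     (\<Sum>\<mu>\<in>kUN k n. SA_select k \<delta> n L1 L2 \<mu> * (real (count \<mu> j) / real k))"

definition SA_signals :: "nat \<Rightarrow> nat \<Rightarrow> nat multiset set set" where
  "SA_signals k n = Pow (kUN k n)"

definition outcome :: "nat \<Rightarrow> (nat \<Rightarrow> real \<times> real) \<Rightarrow> (nat \<Rightarrow> real) \<Rightarrow> real \<times> real" where
  "outcome n a p = ((\<Sum>j<n. p j * fst (a j)), (\<Sum>j<n. p j * snd (a j)))"

definition pure_NE :: "'s set \<Rightarrow> ('s \<Rightarrow> 's \<Rightarrow> real \<times> real) \<Rightarrow> 's \<Rightarrow> 's \<Rightarrow> bool" where
  "pure_NE S u s1 s2 \<longleftrightarrow> s1 \<in> S \<and> s2 \<in> S \<and>
     (\<forall>t\<in>S. fst (u t s2) \<le> fst (u s1 s2)) \<and>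
     (\<forall>t\<in>S. snd (u s1 t) \<le> snd (u s1 s2))"

definition anonymous :: "'s set \<Rightarrow> ('s \<Rightarrow> 's \<Rightarrow> 'b) \<Rightarrow> bool" where
  "anonymous S g \<longleftrightarrow> (\<forall>s1\<in>S. \<forall>s2\<in>S. g s1 s2 = g s2 s1)"

end

theory Submission
  imports Defs
begin

text \<open>Abstract the k-uniform distributions to a finite set U and each player's utility to a
  function on U; the mechanism then only averages these functions over the submitted lists.
  An equilibrium is built from a cardinality-minimal set W containing everything above either of
  its two averages: if some alternative lies weakly above both averages, both players list an
  undominated such alternative x and split the rest of W between them; otherwise W itself splits
  into the alternatives good for player 1 and those good for player 2. Conversely, in any
  equilibrium a player could deviate to a singleton or add an alternative to his list, so no
  alternative beats the equilibrium payoffs of both players by more than \<delta>. Finally, by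
  Caratheodory every point of conv(A) is a combination of three alternatives, whose k-fold weights
  round to integers at a total loss of at most 1/k.\<close>

definition average :: "('m \<Rightarrow> real) \<Rightarrow> 'm set \<Rightarrow> real" where
  "average h S = sum h S / real (card S)"

lemma average_singleton [simp]: "average h {x} = h x"
  by (simp add: average_def)

lemma average_eq_iff:
  assumes "finite S" "S \<noteq> {}"
  shows "average h S = a \<longleftrightarrow> sum h S = a * real (card S)"
  using assms by (auto simp: average_def divide_eq_eq card_gt_0_iff)

lemma average_le_iff:
  assumes "finite S" "S \<noteq> {}"
  shows "average h S \<le> a \<longleftrightarrow> sum h S \<le> a * real (card S)"
  using assms by (simp add: average_def pos_divide_le_eq card_gt_0_iff)

lemma average_le:
  assumes "finite S" "S \<noteq> {}" "\<And>x. x \<in> S \<Longrightarrow> h x \<le> a"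
  shows "average h S \<le> a"
  using assms sum_bounded_above[of S h a] by (simp add: average_le_iff mult.commute)

lemma average_ge:
  assumes "finite S" "S \<noteq> {}" "\<And>x. x \<in> S \<Longrightarrow> a \<le> h x"
  shows "a \<le> average h S"
  using assms sum_bounded_below[of S a h]
  by (simp add: average_def pos_le_divide_eq card_gt_0_iff mult.commute)

lemma ex_ge_average:
  assumes "finite S" "S \<noteq> {}"
  shows "\<exists>x\<in>S. average h S \<le> h x"
proof (rule ccontr)
  assume "\<not> ?thesis"
  then have "sum h S < sum (\<lambda>_. average h S) S"
    using assms by (intro sum_strict_mono) auto
  then show False
    using average_eq_iff[OF assms, of h "average h S"] by (simp add: mult.commute)
qed

lemma average_Diff_gt:
  assumes "finite W" "D \<subseteq> W" "D \<noteq> {}" "W - D \<noteq> {}" "\<And>x. x \<in> D \<Longrightarrow> h x < average h W"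
  shows "average h W < average h (W - D)"
proof -
  define a where "a = average h W"
  have "finite D" "finite (W - D)" "W \<noteq> {}" using assms finite_subset by auto
  have sum_W: "sum h W = a * real (card W)"
    using \<open>W \<noteq> {}\<close> assms(1) by (simp add: a_def average_def card_gt_0_iff)
  have "sum h D < a * real (card D)"
    using sum_strict_mono[OF \<open>finite D\<close> \<open>D \<noteq> {}\<close>, of h "\<lambda>_. a"] assms(5) a_def by (simp add: mult.commute)
  moreover have "sum h (W - D) = sum h W - sum h D"
    by (rule sum_diff[OF assms(1,2)])
  moreover have "real (card (W - D)) = real (card W) - real (card D)"
    using card_Diff_subset[OF \<open>finite D\<close> assms(2)] card_mono[OF assms(1,2)] by simp
  ultimately have "a * real (card (W - D)) < sum h (W - D)"
    using sum_W by (simp add: right_diff_distrib)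
  then show ?thesis
    using average_le_iff[OF \<open>finite (W - D)\<close> assms(4)] a_def by (simp add: not_le[symmetric])
qed

lemma average_insert:
  assumes "finite W" "x \<notin> W"
  shows "average h (insert x W) = (h x + sum h W) / (real (card W) + 1)"
  using assms by (simp add: average_def)

lemma average_insert_average:
  assumes "finite W" "W \<noteq> {}" "x \<notin> W" "h x = average h W"
  shows "average h (insert x W) = average h W"
  using assms by (simp add: average_insert average_def card_gt_0_iff field_simps)

lemma le_average_if_average_insert_le:
  assumes "finite W" "W \<noteq> {}" "x \<notin> W" "average h (insert x W) \<le> average h W"
  shows "h x \<le> average h W"
  using assms by (simp add: average_insert average_def card_gt_0_iff field_simps)

lemma average_le_average:
  assumes "finite S" "finite W" "S \<noteq> {}" "W \<noteq> {}"
    and "\<forall>x\<in>W - S. average h W \<le> h x" "\<forall>x\<in>S - W. h x \<le> average h W"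
  shows "average h S \<le> average h W"
proof -
  define a where "a = average h W"
  define e where "e x = h x - a" for x
  have "sum e W = 0"
    using assms(2,4) by (simp add: e_def a_def sum_subtractf average_def card_gt_0_iff)
  moreover have "sum e W = sum e (W - S) + sum e (W \<inter> S)"
    by (metis assms(2) add.commute sum.Int_Diff)
  moreover have "sum e S = sum e (S - W) + sum e (S \<inter> W)"
    by (metis assms(1) add.commute sum.Int_Diff)
  moreover have "0 \<le> sum e (W - S)" "sum e (S - W) \<le> 0"
    using assms(5,6) by (auto simp: e_def a_def intro: sum_nonneg sum_nonpos)
  ultimately have "sum e S \<le> 0" by (simp add: Int_commute)
  then show ?thesis
    using assms(1,3) by (simp add: e_def a_def sum_subtractf average_le_iff mult.commute)
qed

section \<open>The mechanism over an abstract set of distributions\<close>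

text \<open>U stands for k-UN([n]) and h for a player's expected utility under each distribution.\<close>

definition SA_payoff :: "'m set \<Rightarrow> real \<Rightarrow> ('m \<Rightarrow> real) \<Rightarrow> 'm set \<Rightarrow> 'm set \<Rightarrow> real" where
  "SA_payoff U \<delta> h L1 L2 =
     (if L1 = {} \<and> L2 = {} then average h U
      else if L1 \<inter> L2 = {} then average h (L1 \<union> L2)
      else (1 - \<delta>) * average h (L1 \<inter> L2) + \<delta> * average h (L1 \<union> L2))"

text \<open>As SA_payoff is symmetric, the condition on player 2 in a profile (L1, L2) is
  best_reply U \<delta> g L2 L1.\<close>

definition best_reply :: "'m set \<Rightarrow> real \<Rightarrow> ('m \<Rightarrow> real) \<Rightarrow> 'm set \<Rightarrow> 'm set \<Rightarrow> bool" where
  "best_reply U \<delta> h L L' \<longleftrightarrow> L \<subseteq> U \<and> (\<forall>M\<subseteq>U. SA_payoff U \<delta> h M L' \<le> SA_payoff U \<delta> h L L')"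

lemma best_reply_subset: "best_reply U \<delta> h L L' \<Longrightarrow> L \<subseteq> U"
  by (simp add: best_reply_def)

lemma best_reply_payoff_ge:
  "best_reply U \<delta> h L L' \<Longrightarrow> M \<subseteq> U \<Longrightarrow> SA_payoff U \<delta> h M L' \<le> SA_payoff U \<delta> h L L'"
  by (simp add: best_reply_def)

lemma SA_payoff_commute: "SA_payoff U \<delta> h L1 L2 = SA_payoff U \<delta> h L2 L1"
  unfolding SA_payoff_def by (simp add: Int_commute Un_commute conj_commute)

lemma SA_payoff_le:
  assumes "finite U" "M \<subseteq> U" "L' \<subseteq> U" "L' \<noteq> {}" "0 \<le> \<delta>" "\<delta> \<le> 1" "a \<le> m"
    and "\<forall>x\<in>L'. h x \<le> m" "\<And>S. L' \<subseteq> S \<Longrightarrow> S \<subseteq> U \<Longrightarrow> average h S \<le> a"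
  shows "SA_payoff U \<delta> h M L' \<le> (1 - \<delta>) * m + \<delta> * a"
proof -
  have union: "average h (M \<union> L') \<le> a" using assms by simp
  show ?thesis
  proof (cases "M \<inter> L' = {}")
    case True
    have "(1 - \<delta>) * a \<le> (1 - \<delta>) * m" using assms by (intro mult_left_mono) auto
    then show ?thesis using True union assms(4) by (simp add: SA_payoff_def algebra_simps)
  next
    case False
    have "average h (M \<inter> L') \<le> m"
      using False assms by (intro average_le) (auto intro: finite_subset)
    then have "(1 - \<delta>) * average h (M \<inter> L') \<le> (1 - \<delta>) * m"
      using assms by (intro mult_left_mono) auto
    moreover have "\<delta> * average h (M \<union> L') \<le> \<delta> * a"
      using union assms by (intro mult_left_mono) auto
    ultimately show ?thesis using False assms(4) by (simp add: SA_payoff_def)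
  qed
qed

lemma best_reply_if_core_payoff:
  assumes "finite U" "W \<subseteq> U" "L \<union> L' = W" "L' \<noteq> {}" "0 \<le> \<delta>" "\<delta> \<le> 1"
    and "\<forall>x\<in>U - W. h x \<le> average h W" "\<forall>x\<in>W - L'. average h W \<le> h x"
    and "\<forall>x\<in>L'. h x \<le> m" "average h W \<le> m"
    and "SA_payoff U \<delta> h L L' = (1 - \<delta>) * m + \<delta> * average h W"
  shows "best_reply U \<delta> h L L'"
  unfolding best_reply_def
proof (intro conjI allI impI)
  show "L \<subseteq> U" using assms(2,3) by auto
  have finite: "finite S" if "S \<subseteq> U" for S using assms(1) that finite_subset by auto
  fix M assume "M \<subseteq> U"
  have "average h S \<le> average h W" if "L' \<subseteq> S" "S \<subseteq> U" for S
    using that assms(2-4,7,8) finite by (intro average_le_average) auto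
  then have "SA_payoff U \<delta> h M L' \<le> (1 - \<delta>) * m + \<delta> * average h W"
    using assms \<open>M \<subseteq> U\<close> by (intro SA_payoff_le) auto
  then show "SA_payoff U \<delta> h M L' \<le> SA_payoff U \<delta> h L L'" using assms(11) by simp
qed

section \<open>Existence of equilibria\<close>

definition balanced_core :: "'m set \<Rightarrow> ('m \<Rightarrow> real) \<Rightarrow> ('m \<Rightarrow> real) \<Rightarrow> 'm set \<Rightarrow> bool" where
  "balanced_core U f g W \<longleftrightarrow> W \<subseteq> U \<and> W \<noteq> {} \<and>
     (\<forall>x\<in>U - W. f x \<le> average f W \<and> g x \<le> average g W) \<and>
     (\<forall>x\<in>W. average f W \<le> f x \<or> average g W \<le> g x)"

text \<open>A cardinality-minimal W with the first three properties has the fourth: discarding the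
  elements of W below both averages would raise both averages.\<close>

lemma ex_balanced_core:
  assumes "finite U" "U \<noteq> {}"
  obtains W where "balanced_core U f g W"
proof -
  define P where "P W \<longleftrightarrow> W \<subseteq> U \<and> W \<noteq> {} \<and>
      (\<forall>x\<in>U - W. f x \<le> average f W \<and> g x \<le> average g W)" for W
  have "P U" using assms(2) by (simp add: P_def)
  then obtain W where "P W" and minimal: "\<And>W'. P W' \<Longrightarrow> card W \<le> card W'"
    using ex_has_least_nat[of P U card] by blast
  have "finite W" "W \<noteq> {}" using \<open>P W\<close> assms(1) finite_subset by (auto simp: P_def)
  have "\<forall>x\<in>W. average f W \<le> f x \<or> average g W \<le> g x"
  proof (rule ccontr)
    assume low: "\<not> ?thesis"
    define D where "D = {x\<in>W. f x < average f W \<and> g x < average g W}"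
    have "D \<noteq> {}" "D \<subseteq> W" using low by (auto simp: D_def not_le)
    obtain z where "z \<in> W" "average f W \<le> f z"
      using ex_ge_average[OF \<open>finite W\<close> \<open>W \<noteq> {}\<close>] by blast
    then have "W - D \<noteq> {}" by (auto simp: D_def)
    have raised: "average f W < average f (W - D)" "average g W < average g (W - D)"
      using \<open>finite W\<close> \<open>D \<subseteq> W\<close> \<open>D \<noteq> {}\<close> \<open>W - D \<noteq> {}\<close>
      by (auto intro!: average_Diff_gt simp: D_def)
    have "P (W - D)"
      unfolding P_def
    proof (intro conjI ballI)
      show "W - D \<subseteq> U" "W - D \<noteq> {}" using \<open>P W\<close> \<open>W - D \<noteq> {}\<close> by (auto simp: P_def)
      fix x assume "x \<in> U - (W - D)"
      then have "x \<in> U - W \<or> x \<in> D" by blast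
      then have "f x \<le> average f W \<and> g x \<le> average g W"
        using \<open>P W\<close> by (auto simp: P_def D_def)
      with raised show "f x \<le> average f (W - D)" "g x \<le> average g (W - D)" by linarith+
    qed
    then have "card W \<le> card (W - D)" by (rule minimal)
    moreover have "card (W - D) < card W"
      using \<open>finite W\<close> \<open>D \<subseteq> W\<close> \<open>D \<noteq> {}\<close> by (intro psubset_card_mono) auto
    ultimately show False by simp
  qed
  with \<open>P W\<close> show thesis by (intro that[of W]) (simp add: balanced_core_def P_def)
qed

lemma ex_undominated:
  fixes f g :: "'m \<Rightarrow> real"
  assumes "finite U" "x\<^sub>0 \<in> U" "a\<^sub>1 \<le> f x\<^sub>0" "a\<^sub>2 \<le> g x\<^sub>0"
  obtains x where "x \<in> U" "a\<^sub>1 \<le> f x" "a\<^sub>2 \<le> g x" "\<forall>y\<in>U. \<not> (f x < f y \<and> g x < g y)"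
proof -
  define R where "R x y \<longleftrightarrow> f x < f y \<and> g x < g y" for x y
  have "asymp_on U R" "transp_on U R"
    unfolding R_def asymp_on_def transp_on_def by auto
  then obtain x where "x \<in> U" "a\<^sub>1 \<le> f x \<and> a\<^sub>2 \<le> g x"
      and "\<forall>y\<in>U. R x y \<longrightarrow> \<not> (a\<^sub>1 \<le> f y \<and> a\<^sub>2 \<le> g y)"
    using Finite_Set.bex_max_element_with_property[of U R "\<lambda>x. a\<^sub>1 \<le> f x \<and> a\<^sub>2 \<le> g x"] assms by blast
  then show thesis by (intro that) (auto simp: R_def)
qed

lemma best_replies_if_no_point_above_core:
  assumes "finite U" "0 \<le> \<delta>" "\<delta> \<le> 1" "balanced_core U f g W"
    and "\<forall>x\<in>U. \<not> (average f W \<le> f x \<and> average g W \<le> g x)"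
  shows "\<exists>L1 L2. best_reply U \<delta> f L1 L2 \<and> best_reply U \<delta> g L2 L1"
proof -
  define C1 where "C1 = {x\<in>W. average f W \<le> f x}"
  define C2 where "C2 = W - C1"
  have core: "W \<subseteq> U" "W \<noteq> {}" "\<forall>x\<in>U - W. f x \<le> average f W \<and> g x \<le> average g W"
      "\<forall>x\<in>W. average f W \<le> f x \<or> average g W \<le> g x"
    using assms(4) by (auto simp: balanced_core_def)
  have "finite W" using core(1) assms(1) finite_subset by auto
  have C1_below: "\<forall>x\<in>C1. g x \<le> average g W" and C2_below: "\<forall>x\<in>C2. f x \<le> average f W"
    using assms(5) core(1) by (auto simp: C1_def C2_def)
  have C2_above: "\<forall>x\<in>C2. average g W \<le> g x"
    using core(4) by (auto simp: C1_def C2_def)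
  have "C1 \<noteq> {}" using ex_ge_average[OF \<open>finite W\<close> core(2), of f] by (auto simp: C1_def)
  have "C2 \<noteq> {}"
    using ex_ge_average[OF \<open>finite W\<close> core(2), of g] assms(5) core(1) by (auto simp: C1_def C2_def)
  have parts: "C1 \<union> C2 = W" "C1 \<inter> C2 = {}" "W - C1 = C2" "W - C2 = C1"
    by (auto simp: C1_def C2_def)
  have payoff: "SA_payoff U \<delta> h C1 C2 = (1 - \<delta>) * average h W + \<delta> * average h W" for h
    using parts \<open>C1 \<noteq> {}\<close> by (simp add: SA_payoff_def algebra_simps)
  then have payoff': "SA_payoff U \<delta> h C2 C1 = (1 - \<delta>) * average h W + \<delta> * average h W" for h
    by (simp add: SA_payoff_commute)
  have "best_reply U \<delta> f C1 C2"
    using assms(1-3) core(1,3) parts C2_below \<open>C2 \<noteq> {}\<close> payoff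
    by (intro best_reply_if_core_payoff[where W = W and m = "average f W"]) (auto simp: C1_def)
  moreover have "best_reply U \<delta> g C2 C1"
    using assms(1-3) core(1,3) parts C1_below C2_above \<open>C1 \<noteq> {}\<close> payoff'
    by (intro best_reply_if_core_payoff[where W = W and m = "average g W"]) auto
  ultimately show ?thesis by blast
qed

lemma best_replies_if_point_above_core:
  assumes "finite U" "0 \<le> \<delta>" "\<delta> \<le> 1" "balanced_core U f g W"
    and "x \<in> U" "average f W \<le> f x" "average g W \<le> g x" "\<forall>y\<in>U. \<not> (f x < f y \<and> g x < g y)"
  shows "\<exists>L1 L2. best_reply U \<delta> f L1 L2 \<and> best_reply U \<delta> g L2 L1"
proof -
  define a1 a2 where "a1 = average f W" and "a2 = average g W"
  define W' where "W' = insert x W"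
  have core: "W \<subseteq> U" "W \<noteq> {}" "\<forall>y\<in>U - W. f y \<le> a1 \<and> g y \<le> a2"
      "\<forall>y\<in>W. a1 \<le> f y \<or> a2 \<le> g y"
    using assms(4) by (auto simp: balanced_core_def a1_def a2_def)
  have "finite W" using core(1) assms(1) finite_subset by auto
  have averages: "average f W' = a1" "average g W' = a2"
  proof -
    have "x \<notin> W \<Longrightarrow> f x = a1 \<and> g x = a2"
      using core(3) assms(5-7) a1_def a2_def by force
    then show "average f W' = a1" "average g W' = a2"
      using average_insert_average[OF \<open>finite W\<close> core(2)]
      by (cases "x \<in> W"; simp add: W'_def insert_absorb a1_def a2_def)+
  qed
  define C1 where "C1 = {y\<in>W' - {x}. a1 \<le> f y \<and> g y \<le> g x}"
  define C2 where "C2 = W' - {x} - C1"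
  define L1 L2 where "L1 = insert x C1" and "L2 = insert x C2"
  have parts: "L1 \<union> L2 = W'" "L1 \<inter> L2 = {x}" "W' - L1 = C2" "W' - L2 = C1"
    by (auto simp: L1_def L2_def C1_def C2_def W'_def)
  have outside: "\<forall>y\<in>U - W'. f y \<le> average f W' \<and> g y \<le> average g W'"
    using core(3) averages by (auto simp: W'_def)
  have "W' \<subseteq> U" using core(1) assms(5) by (auto simp: W'_def)
  have payoff: "SA_payoff U \<delta> h L1 L2 = (1 - \<delta>) * h x + \<delta> * average h W'" for h
    using parts by (auto simp: SA_payoff_def L1_def)
  then have payoff': "SA_payoff U \<delta> h L2 L1 = (1 - \<delta>) * h x + \<delta> * average h W'" for h
    by (simp add: SA_payoff_commute)
  have C2_props: "f y \<le> f x \<and> a2 \<le> g y" if "y \<in> C2" for y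
  proof -
    have "y \<in> W" "y \<noteq> x" "f y < a1 \<or> g x < g y"
      using that by (auto simp: C2_def C1_def W'_def)
    then show ?thesis
      using core(4) assms(5-8) core(1) a1_def a2_def by force
  qed
  have "best_reply U \<delta> f L1 L2"
    using assms(1-3,6) \<open>W' \<subseteq> U\<close> parts outside averages payoff C2_props
    by (intro best_reply_if_core_payoff[where W = W' and m = "f x"])
       (auto simp: L2_def C1_def a1_def)
  moreover have "best_reply U \<delta> g L2 L1"
    using assms(1-3,7) \<open>W' \<subseteq> U\<close> parts outside averages payoff' C2_props
    by (intro best_reply_if_core_payoff[where W = W' and m = "g x"])
       (auto simp: L1_def C1_def a2_def)
  ultimately show ?thesis by blast
qed

lemma ex_SA_equilibrium:
  assumes "finite U" "0 \<le> \<delta>" "\<delta> \<le> 1"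
  shows "\<exists>L1 L2. best_reply U \<delta> f L1 L2 \<and> best_reply U \<delta> g L2 L1"
proof (cases "U = {}")
  case True
  then show ?thesis by (auto simp: best_reply_def)
next
  case False
  then obtain W where core: "balanced_core U f g W"
    using ex_balanced_core[OF assms(1)] by blast
  show ?thesis
  proof (cases "\<exists>x\<in>U. average f W \<le> f x \<and> average g W \<le> g x")
    case True
    then obtain x where "x \<in> U" "average f W \<le> f x" "average g W \<le> g x"
        "\<forall>y\<in>U. \<not> (f x < f y \<and> g x < g y)"
      using ex_undominated[OF assms(1)] by metis
    then show ?thesis using best_replies_if_point_above_core[OF assms core] by blast
  next
    case False
    then show ?thesis using best_replies_if_no_point_above_core[OF assms core] by blast
  qed
qed

section \<open>Equilibria are close to the Pareto frontier\<close>

lemma SA_payoff_singleton_ge: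
  assumes "finite U" "L' \<subseteq> U" "x \<in> L'" "0 \<le> \<delta>" "\<forall>y\<in>U. 0 \<le> h y \<and> h y \<le> 1"
  shows "h x - \<delta> \<le> SA_payoff U \<delta> h {x} L'"
proof -
  have "0 \<le> average h L'"
    using assms finite_subset by (intro average_ge) auto
  then have "0 \<le> \<delta> * average h L'" using assms(4) by simp
  moreover have "\<delta> * h x \<le> \<delta>" using assms by (simp add: mult_left_le subset_eq)
  ultimately have "h x - \<delta> \<le> (1 - \<delta>) * h x + \<delta> * average h L'"
    unfolding left_diff_distrib by linarith
  moreover have "{x} \<inter> L' = {x}" "{x} \<union> L' = L'" using assms(3) by auto
  ultimately show ?thesis by (simp add: SA_payoff_def)
qed

lemma best_reply_average_le:
  assumes "best_reply U \<delta> h L L'" "L' \<noteq> {}"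
  shows "average h (L \<union> L') \<le> SA_payoff U \<delta> h L L'"
proof (cases "L \<inter> L' = {}")
  case True
  then show ?thesis using assms(2) by (simp add: SA_payoff_def)
next
  case False
  have "(L - L') \<inter> L' = {}" "(L - L') \<union> L' = L \<union> L'" by auto
  then have "SA_payoff U \<delta> h (L - L') L' = average h (L \<union> L')"
    using assms(2) by (simp add: SA_payoff_def)
  moreover have "L - L' \<subseteq> U" using best_reply_subset[OF assms(1)] by auto
  ultimately show ?thesis using best_reply_payoff_ge[OF assms(1)] by metis
qed

lemma best_reply_ge_outside:
  assumes "finite U" "0 < \<delta>" "best_reply U \<delta> h L L'" "L' \<subseteq> U" "x \<in> U" "x \<notin> L \<union> L'"
  shows "h x \<le> SA_payoff U \<delta> h L L'"
proof (cases "L \<union> L' = {}")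
  case True
  then have "SA_payoff U \<delta> h {x} L' = h x" by (simp add: SA_payoff_def)
  then show ?thesis using best_reply_payoff_ge[OF assms(3), of "{x}"] assms(5) by simp
next
  case False
  define W where "W = L \<union> L'"
  have "finite W" "W \<noteq> {}" "x \<notin> W"
    using assms(1,4,6) best_reply_subset[OF assms(3)] False finite_subset by (auto simp: W_def)
  have "insert x L \<inter> L' = L \<inter> L'" "insert x L \<union> L' = insert x W"
    using assms(6) by (auto simp: W_def)
  moreover have "SA_payoff U \<delta> h (insert x L) L' \<le> SA_payoff U \<delta> h L L'"
    using best_reply_payoff_ge[OF assms(3)] best_reply_subset[OF assms(3)] assms(5) by simp
  ultimately have "average h (insert x W) \<le> average h W"
    using assms(2) False by (auto simp: SA_payoff_def W_def split: if_splits)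
  then have "h x \<le> average h W"
    by (rule le_average_if_average_insert_le[OF \<open>finite W\<close> \<open>W \<noteq> {}\<close> \<open>x \<notin> W\<close>])
  moreover have "average h W \<le> SA_payoff U \<delta> h L L'"
  proof (cases "L' = {}")
    case True
    then show ?thesis using False by (simp add: SA_payoff_def W_def)
  qed (simp add: W_def best_reply_average_le[OF assms(3)])
  ultimately show ?thesis by simp
qed

lemma best_reply_le_payoff_plus:
  assumes "finite U" "0 < \<delta>" "\<forall>y\<in>U. 0 \<le> h y \<and> h y \<le> 1"
    and "best_reply U \<delta> h L L'" "L' \<subseteq> U" "x \<in> U" "x \<in> L' \<or> x \<notin> L"
  shows "h x \<le> SA_payoff U \<delta> h L L' + \<delta>"
proof (cases "x \<in> L'")
  case True
  then have "h x - \<delta> \<le> SA_payoff U \<delta> h {x} L'"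
    using assms by (intro SA_payoff_singleton_ge) auto
  then show ?thesis using best_reply_payoff_ge[OF assms(4), of "{x}"] assms(6) by simp
next
  case False
  then show ?thesis using best_reply_ge_outside[OF assms(1,2,4,5,6)] assms(2,7) by simp
qed

lemma SA_equilibrium_near_pareto:
  assumes "finite U" "0 < \<delta>" "\<forall>y\<in>U. 0 \<le> f y \<and> f y \<le> 1" "\<forall>y\<in>U. 0 \<le> g y \<and> g y \<le> 1"
    and "best_reply U \<delta> f L1 L2" "best_reply U \<delta> g L2 L1" "x \<in> U"
  shows "\<not> (SA_payoff U \<delta> f L1 L2 + \<delta> < f x \<and> SA_payoff U \<delta> g L1 L2 + \<delta> < g x)"
proof -
  have "L1 \<subseteq> U" "L2 \<subseteq> U" using assms(5,6) by (simp_all add: best_reply_subset)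
  consider "x \<in> L2 \<or> x \<notin> L1" | "x \<in> L1 \<or> x \<notin> L2" by blast
  then show ?thesis
  proof cases
    case 1
    then show ?thesis using best_reply_le_payoff_plus[OF assms(1-3,5) \<open>L2 \<subseteq> U\<close> assms(7)] by simp
  next
    case 2
    then show ?thesis using best_reply_le_payoff_plus[OF assms(1,2,4,6) \<open>L1 \<subseteq> U\<close> assms(7)]
      by (simp add: SA_payoff_commute)
  qed
qed

lemma finite_kUN: "finite (kUN k n)"
proof -
  have "kUN k n = multisets_of_size {..<n} k" by (auto simp: kUN_def multisets_of_size_def)
  then show ?thesis by (simp add: finite_multisets_of_size)
qed

definition mset_average :: "('a \<Rightarrow> real) \<Rightarrow> 'a multiset \<Rightarrow> real" where
  "mset_average h M = (\<Sum>x\<in>#M. h x) / real (size M)"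

lemma sum_mset_eq_sum_count:
  fixes h :: "'a \<Rightarrow> 'b::comm_semiring_1"
  assumes "finite A" "set_mset M \<subseteq> A"
  shows "(\<Sum>x\<in>#M. h x) = (\<Sum>x\<in>A. of_nat (count M x) * h x)"
  using assms(2)
proof (induction M)
  case empty
  then show ?case by simp
next
  case (add y M)
  have "(\<Sum>x\<in>A. of_nat (count (add_mset y M) x) * h x)
      = (\<Sum>x\<in>A. of_nat (count M x) * h x + (if x = y then h y else 0))"
    by (intro sum.cong) (auto simp: algebra_simps)
  also have "\<dots> = (\<Sum>x\<in>A. of_nat (count M x) * h x) + h y"
    using add.prems assms(1) by (simp add: sum.distrib)
  finally show ?case using add by (simp add: add.commute)
qed

lemma mset_average_bounds:
  assumes "M \<noteq> {#}" "\<forall>x\<in>#M. 0 \<le> h x \<and> h x \<le> 1"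
  shows "0 \<le> mset_average h M" "mset_average h M \<le> 1"
proof -
  have "(\<Sum>x\<in>#M. 0) \<le> (\<Sum>x\<in>#M. h x)" using assms(2) by (intro sum_mset_mono) auto
  then show "0 \<le> mset_average h M" by (simp add: mset_average_def)
  have "(\<Sum>x\<in>#M. h x) \<le> (\<Sum>x\<in>#M. 1)" using assms(2) by (intro sum_mset_mono) auto
  then show "mset_average h M \<le> 1"
    using assms(1) by (simp add: mset_average_def divide_le_eq_1 nonempty_has_size)
qed

lemma mset_average_kUN_bounds:
  assumes "k > 0" "\<forall>j<n. 0 \<le> h j \<and> h j \<le> 1"
  shows "\<forall>\<mu>\<in>kUN k n. 0 \<le> mset_average h \<mu> \<and> mset_average h \<mu> \<le> 1"
proof
  fix \<mu> assume "\<mu> \<in> kUN k n"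
  then have "\<mu> \<noteq> {#}" "\<forall>j\<in>#\<mu>. 0 \<le> h j \<and> h j \<le> 1" using assms by (auto simp: kUN_def)
  then show "0 \<le> mset_average h \<mu> \<and> mset_average h \<mu> \<le> 1" by (simp add: mset_average_bounds)
qed

lemma sum_uniform_eq_average:
  assumes "finite U" "X \<subseteq> U"
  shows "(\<Sum>x\<in>U. (if x \<in> X then 1 / real (card X) else 0) * h x) = average h X"
proof -
  have "(\<Sum>x\<in>U. (if x \<in> X then 1 / real (card X) else 0) * h x)
      = (\<Sum>x\<in>U. if x \<in> X then h x / real (card X) else 0)"
    by (intro sum.cong) auto
  also have "\<dots> = (\<Sum>x\<in>U \<inter> X. h x / real (card X))"
    using assms(1) by (simp add: sum.inter_restrict)
  also have "U \<inter> X = X" using assms(2) by auto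
  finally show ?thesis by (simp add: average_def sum_divide_distrib)
qed

lemma sum_SA_select:
  assumes "L1 \<subseteq> kUN k n" "L2 \<subseteq> kUN k n"
  shows "(\<Sum>\<mu>\<in>kUN k n. SA_select k \<delta> n L1 L2 \<mu> * h \<mu>) = SA_payoff (kUN k n) \<delta> h L1 L2"
proof -
  define u where "u X \<mu> = (if \<mu> \<in> X then 1 / real (card X) else 0)" for X and \<mu> :: "nat multiset"
  have uniform: "(\<Sum>\<mu>\<in>kUN k n. u X \<mu> * h \<mu>) = average h X" if "X \<subseteq> kUN k n" for X
    unfolding u_def by (rule sum_uniform_eq_average[OF finite_kUN that])
  have "SA_select k \<delta> n L1 L2 = (if L1 = {} \<and> L2 = {} then u (kUN k n)
      else if L1 \<inter> L2 = {} then u (L1 \<union> L2)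
      else (\<lambda>\<mu>. (1 - \<delta>) * u (L1 \<inter> L2) \<mu> + \<delta> * u (L1 \<union> L2) \<mu>))"
    by (auto simp: SA_select_def u_def fun_eq_iff)
  moreover have "L1 \<inter> L2 \<subseteq> kUN k n" "L1 \<union> L2 \<subseteq> kUN k n" using assms by auto
  ultimately show ?thesis
    by (simp add: SA_payoff_def uniform distrib_right sum.distrib
        mult.assoc flip: sum_distrib_left)
qed

lemma outcome_SA_alloc:
  assumes "L1 \<subseteq> kUN k n" "L2 \<subseteq> kUN k n"
  shows "outcome n a (SA_alloc k \<delta> n L1 L2) =
    (SA_payoff (kUN k n) \<delta> (mset_average (\<lambda>j. fst (a j))) L1 L2,
     SA_payoff (kUN k n) \<delta> (mset_average (\<lambda>j. snd (a j))) L1 L2)"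
proof -
  have mean: "(\<Sum>j<n. real (count \<mu> j) / real k * h j) = mset_average h \<mu>" if "\<mu> \<in> kUN k n" for \<mu> h
    using that sum_mset_eq_sum_count[of "{..<n}" \<mu> h]
    by (simp add: kUN_def mset_average_def sum_divide_distrib)
  have "(\<Sum>j<n. SA_alloc k \<delta> n L1 L2 j * h j)
      = (\<Sum>\<mu>\<in>kUN k n. SA_select k \<delta> n L1 L2 \<mu> * (\<Sum>j<n. real (count \<mu> j) / real k * h j))" for h
    unfolding SA_alloc_def sum_distrib_right sum_distrib_left
    by (subst sum.swap) (simp add: mult.assoc)
  also have "\<dots> h = SA_payoff (kUN k n) \<delta> (mset_average h) L1 L2" for h
    using mean sum_SA_select[OF assms] by simp
  finally show ?thesis by (simp add: outcome_def)
qed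

lemma SA_alloc_commute: "SA_alloc k \<delta> n L1 L2 = SA_alloc k \<delta> n L2 L1"
proof -
  have "SA_select k \<delta> n L1 L2 = SA_select k \<delta> n L2 L1"
    by (auto simp: SA_select_def fun_eq_iff Int_commute Un_commute)
  then show ?thesis by (simp add: SA_alloc_def fun_eq_iff)
qed

lemma pure_NE_SA_iff:
  "pure_NE (SA_signals k n) (\<lambda>M1 M2. outcome n a (SA_alloc k \<delta> n M1 M2)) L1 L2 \<longleftrightarrow>
     best_reply (kUN k n) \<delta> (mset_average (\<lambda>j. fst (a j))) L1 L2 \<and>
     best_reply (kUN k n) \<delta> (mset_average (\<lambda>j. snd (a j))) L2 L1"
  by (auto simp: pure_NE_def SA_signals_def best_reply_def outcome_SA_alloc SA_payoff_commute)

section \<open>Approximating the convex hull by k-uniform distributions\<close>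

lemma ex_rounding_three:
  fixes X Y Z :: real
  assumes "0 \<le> X" "0 \<le> Y" "0 \<le> Z" "X + Y + Z = real k"
  obtains c1 c2 c3 where "c1 + c2 + c3 = k"
    "max 0 (X - real c1) + max 0 (Y - real c2) + max 0 (Z - real c3) \<le> 1"
proof -
  define f1 f2 f3 where "f1 = nat \<lfloor>X\<rfloor>" and "f2 = nat \<lfloor>Y\<rfloor>" and "f3 = nat \<lfloor>Z\<rfloor>"
  have floors: "real f1 \<le> X" "X < real f1 + 1" "real f2 \<le> Y" "Y < real f2 + 1"
      "real f3 \<le> Z" "Z < real f3 + 1"
    using assms(1-3) by (simp_all add: f1_def f2_def f3_def of_nat_floor)
  then have "k = f1 + f2 + f3 \<or> k = f1 + f2 + f3 + 1 \<or> k = f1 + f2 + f3 + 2"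
    using assms(4) by linarith
  then show thesis
  proof (elim disjE)
    assume "k = f1 + f2 + f3"
    then show thesis using floors assms(4) by (intro that[of f1 f2 f3]) (auto simp: max_def)
  next
    assume "k = f1 + f2 + f3 + 1"
    then show thesis using floors assms(4) by (intro that[of "f1 + 1" f2 f3]) (auto simp: max_def)
  next
    assume "k = f1 + f2 + f3 + 2"
    then show thesis using floors assms(4) by (intro that[of "f1 + 1" "f2 + 1" f3]) (auto simp: max_def)
  qed
qed

lemma convex_hull_three_points:
  fixes P :: "(real \<times> real) set"
  assumes "y \<in> convex hull P"
  obtains p1 p2 p3 u v w where "p1 \<in> P" "p2 \<in> P" "p3 \<in> P" "0 \<le> u" "0 \<le> v" "0 \<le> w"
    "u + v + w = 1" "y = u *\<^sub>R p1 + v *\<^sub>R p2 + w *\<^sub>R p3"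
proof -
  obtain S where S: "finite S" "S \<subseteq> P" "card S \<le> 3" "y \<in> convex hull S"
    using assms caratheodory[of P] by auto
  then have "card S = 1 \<or> card S = 2 \<or> card S = 3" using card_gt_0_iff[of S] by fastforce
  then obtain p1 p2 p3 where "S = {p1, p2, p3}"
    by (metis card_1_singletonE card_2_iff card_3_iff insert_absorb2 insert_commute)
  moreover obtain u v w where "0 \<le> u" "0 \<le> v" "0 \<le> w" "u + v + w = 1"
      "y = u *\<^sub>R p1 + v *\<^sub>R p2 + w *\<^sub>R p3"
    using S(4) convex_hull_3[of p1 p2 p3] calculation by auto
  ultimately show thesis using S(2) that by blast
qed

lemma ex_uniform_approximation:
  assumes "k > 0" "\<forall>j\<in>I. a j \<in> {0..1} \<times> {0..1}" "y \<in> convex hull (a ` I)"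
  obtains \<mu> where "size \<mu> = k" "set_mset \<mu> \<subseteq> I"
    "fst y - 1 / real k \<le> mset_average (\<lambda>j. fst (a j)) \<mu>"
    "snd y - 1 / real k \<le> mset_average (\<lambda>j. snd (a j)) \<mu>"
proof -
  obtain p1 p2 p3 u v w where p: "p1 \<in> a ` I" "p2 \<in> a ` I" "p3 \<in> a ` I"
    and uvw: "0 \<le> u" "0 \<le> v" "0 \<le> w" "u + v + w = 1"
    and y: "y = u *\<^sub>R p1 + v *\<^sub>R p2 + w *\<^sub>R p3"
    using convex_hull_three_points[OF assms(3)] by blast
  obtain j1 j2 j3 where j: "j1 \<in> I" "j2 \<in> I" "j3 \<in> I" "p1 = a j1" "p2 = a j2" "p3 = a j3"
    using p by blast
  have "real k * u + real k * v + real k * w = real k"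
    using uvw(4) by (simp flip: distrib_left)
  then obtain c1 c2 c3 where c: "c1 + c2 + c3 = k" and rounding:
    "max 0 (real k * u - real c1) + max 0 (real k * v - real c2) + max 0 (real k * w - real c3) \<le> 1"
    using ex_rounding_three[of "real k * u" "real k * v" "real k * w" k] uvw by auto
  define \<mu> where "\<mu> = replicate_mset c1 j1 + replicate_mset c2 j2 + replicate_mset c3 j3"
  have "size \<mu> = k" "set_mset \<mu> \<subseteq> I" using c j by (auto simp: \<mu>_def)
  have clip: "t * b \<le> max 0 t" if "0 \<le> b" "b \<le> 1" for t b :: real
    using that by (cases "0 \<le> t") (auto simp: mult_left_le mult_nonpos_nonneg)
  have approx: "u * h j1 + v * h j2 + w * h j3 - 1 / real k \<le> mset_average h \<mu>"
    if "\<forall>j\<in>I. 0 \<le> h j \<and> h j \<le> 1" for h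
  proof -
    have "(real k * u - real c1) * h j1 \<le> max 0 (real k * u - real c1)"
        "(real k * v - real c2) * h j2 \<le> max 0 (real k * v - real c2)"
        "(real k * w - real c3) * h j3 \<le> max 0 (real k * w - real c3)"
      using clip that j by auto
    then have "(real k * u - real c1) * h j1 + (real k * v - real c2) * h j2
        + (real k * w - real c3) * h j3 \<le> 1"
      using rounding by linarith
    moreover have "real k * mset_average h \<mu> = real c1 * h j1 + real c2 * h j2 + real c3 * h j3"
      using assms(1) \<open>size \<mu> = k\<close> by (simp add: mset_average_def \<mu>_def)
    ultimately have "real k * (u * h j1 + v * h j2 + w * h j3) \<le> real k * mset_average h \<mu> + 1"
      by (simp add: algebra_simps)
    then show ?thesis using assms(1) by (simp add: field_simps)
  qed
  have "fst y = u * fst (a j1) + v * fst (a j2) + w * fst (a j3)"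
       "snd y = u * snd (a j1) + v * snd (a j2) + w * snd (a j3)"
    using y j by auto
  moreover have "\<forall>j\<in>I. 0 \<le> fst (a j) \<and> fst (a j) \<le> 1" "\<forall>j\<in>I. 0 \<le> snd (a j) \<and> snd (a j) \<le> 1"
    using assms(2) by (auto simp: mem_Times_iff)
  ultimately show thesis
    using approx[of "\<lambda>j. fst (a j)"] approx[of "\<lambda>j. snd (a j)"]
    by (intro that[OF \<open>size \<mu> = k\<close> \<open>set_mset \<mu> \<subseteq> I\<close>]) simp_all
qed

lemma pure_NE_SA_near_pareto:
  assumes "k > 0" "0 < \<delta>" "collection n a"
    and "pure_NE (SA_signals k n) (\<lambda>M1 M2. outcome n a (SA_alloc k \<delta> n M1 M2)) L1 L2"
    and "y \<in> convex hull (a ` {..<n})"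
  shows "\<not> (fst y > fst (outcome n a (SA_alloc k \<delta> n L1 L2)) + \<delta> + 1 / real k \<and>
            snd y > snd (outcome n a (SA_alloc k \<delta> n L1 L2)) + \<delta> + 1 / real k)"
proof -
  define f g where "f = mset_average (\<lambda>j. fst (a j))" and "g = mset_average (\<lambda>j. snd (a j))"
  have equilibrium: "best_reply (kUN k n) \<delta> f L1 L2" "best_reply (kUN k n) \<delta> g L2 L1"
    using assms(4) by (simp_all add: pure_NE_SA_iff f_def g_def)
  then have outcome: "outcome n a (SA_alloc k \<delta> n L1 L2) =
      (SA_payoff (kUN k n) \<delta> f L1 L2, SA_payoff (kUN k n) \<delta> g L1 L2)"
    by (simp add: outcome_SA_alloc best_reply_subset f_def g_def)
  have unit_square: "\<forall>j\<in>{..<n}. a j \<in> {0..1} \<times> {0..1}"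
    using assms(3) by (simp add: collection_def)
  then have "\<forall>j<n. 0 \<le> fst (a j) \<and> fst (a j) \<le> 1" "\<forall>j<n. 0 \<le> snd (a j) \<and> snd (a j) \<le> 1"
    by (auto simp: mem_Times_iff)
  then have "\<forall>\<mu>\<in>kUN k n. 0 \<le> f \<mu> \<and> f \<mu> \<le> 1" "\<forall>\<mu>\<in>kUN k n. 0 \<le> g \<mu> \<and> g \<mu> \<le> 1"
    unfolding f_def g_def by (simp_all add: mset_average_kUN_bounds[OF assms(1)])
  note near_pareto = SA_equilibrium_near_pareto[OF finite_kUN assms(2) this equilibrium]
  obtain \<mu> where "\<mu> \<in> kUN k n" "fst y - 1 / real k \<le> f \<mu>" "snd y - 1 / real k \<le> g \<mu>"
    using ex_uniform_approximation[OF assms(1) unit_square assms(5)]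
    by (auto simp: kUN_def f_def g_def)
  then show ?thesis using near_pareto[of \<mu>] outcome by auto
qed

theorem proposition2:
  fixes k :: nat and \<delta> :: real
  assumes "k > 0" and "0 < \<delta>" and "\<delta> \<le> 1"
  shows "(\<forall>n a. collection n a \<longrightarrow>
            (\<exists>L1 L2. pure_NE (SA_signals k n) (\<lambda>M1 M2. outcome n a (SA_alloc k \<delta> n M1 M2)) L1 L2))
       \<and> (\<forall>n. anonymous (SA_signals k n) (SA_alloc k \<delta> n))
       \<and> (\<forall>n a L1 L2. collection n a \<longrightarrow>
            pure_NE (SA_signals k n) (\<lambda>M1 M2. outcome n a (SA_alloc k \<delta> n M1 M2)) L1 L2 \<longrightarrow>
            \<not> (\<exists>y \<in> convex hull (a ` {..<n}).
                  fst y > fst (outcome n a (SA_alloc k \<delta> n L1 L2)) + \<delta> + 1 / real k \<and>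
                  snd y > snd (outcome n a (SA_alloc k \<delta> n L1 L2)) + \<delta> + 1 / real k))"
proof (intro conjI allI impI)
  fix n a
  show "\<exists>L1 L2. pure_NE (SA_signals k n) (\<lambda>M1 M2. outcome n a (SA_alloc k \<delta> n M1 M2)) L1 L2"
    using ex_SA_equilibrium[OF finite_kUN] assms(2,3) by (simp add: pure_NE_SA_iff)
next
  fix n
  show "anonymous (SA_signals k n) (SA_alloc k \<delta> n)"
    by (simp add: anonymous_def SA_alloc_commute)
next
  fix n a L1 L2
  assume "collection n a"
    and "pure_NE (SA_signals k n) (\<lambda>M1 M2. outcome n a (SA_alloc k \<delta> n M1 M2)) L1 L2"
  then show "\<not> (\<exists>y \<in> convex hull (a ` {..<n}).
      fst y > fst (outcome n a (SA_alloc k \<delta> n L1 L2)) + \<delta> + 1 / real k \<and>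
      snd y > snd (outcome n a (SA_alloc k \<delta> n L1 L2)) + \<delta> + 1 / real k)"
    using pure_NE_SA_near_pareto[OF assms(1,2)] by blast
qed

end
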